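(* The functor $\mathbf F:\mathbf{PA}\to\mathbf{DRC}$, $P\mapsto\mathbb F(P)$, is a left adjoint to the forgetful functor $\mathbf P:\mathbf{DRC}\to\mathbf{PA}$, $S\mapsto\mathbf P(S)$, and $\mathbf{PA}$ is coreflective in $\mathbf{DRC}$.
   Context: Maps are written on the right and composed left to right. A projection algebra is a set $P$ with maps $\theta_p,\delta_p:P\to P$ ($p\in P$) such that for all $p,q$: $p\theta_p=p$, $p\delta_p=p$; $p\theta_{q\theta_p}=q\theta_p$, $p\delta_{q\delta_p}=q\delta_p$; $\theta_q\theta_{q\theta_p}=\theta_q\theta_p$, $\delta_q\delta_{q\delta_p}=\delta_q\delta_p$; $\theta_p\delta_p=\theta_p$, $\delta_p\theta_p=\delta_p$; $\theta_{p\delta_q}\theta_p=\theta_q\theta_p$, $\delta_{p\theta_q}\delta_p=\delta_q\delta_p$. A projection algebra morphism $\phi$ satisfies $(q\theta_p)\phi=(q\phi)\theta_{p\phi}$ and $(q\delta_p)\phi=(q\phi)\delta_{p\phi}$; $\mathbf{PA}$ is the category of projection algebras. Write $p\,\mathscr F\,q$ iff $p=q\delta_p$ and $q=p\theta_q$. A DRC-semigroup is $(S,\cdot,D,R)$, $(S,\cdot)$ a semigroup, $D,R:S\to S$ with, for all $a,b$: $D(a)a=a$, $aR(a)=a$; $D(ab)=D(aD(b))$, $R(ab)=R(R(a)b)$; $D(ab)=D(a)D(ab)D(a)$, $R(ab)=R(b)R(ab)R(b)$; $R(D(a))=D(a)$, $D(R(a))=R(a)$. $\mathbf{DRC}$ is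 the category of DRC-semigroups with maps preserving $\cdot,D,R$. The forgetful functor $\mathbf P$ sends $S$ to $\mathbf P(S)=\{D(a):a\in S\}$ with $q\theta_p=R(qp)$, $q\delta_p=D(pq)$, and a DRC-morphism to its restriction to projections. $\mathbb F(P)$ is the semigroup with presentation on generators $x_p$ ($p\in P$) and relations $x_p^2=x_p$, $x_px_q=x_px_{p\theta_q}$, $x_px_q=x_{q\delta_p}x_q$ ($p,q\in P$); $\overline w$ denotes the class of a word $w$. Every element equals $\overline{x_{p_1}\cdots x_{p_k}}$ for some $p_1\mathscr F p_2\mathscr F\cdots\mathscr F p_k$, and $p_1,p_k$ are determined by the element; $D$ and $R$ on $\mathbb F(P)$ are given by $D(\overline{x_{p_1}\cdots x_{p_k}})=\overline{x_{p_1}}$, $R(\overline{x_{p_1}\cdots x_{p_k}})=\overline{x_{p_k}}$, making $\mathbb F(P)$ a DRC-semigroup whose projection algebra is identified with $P$ via $p\leftrightarrow\overline{x_p}$. For a projection algebra morphism $\phi:P\to P'$, $\mathbf F(\phi):\mathbb F(P)\to\mathbb F(P')$ is the DRC-morphism $\overline w\mapsto\overline{w'}$ where $w'$ replaces each $x_p$ by $x_{p\phi}$. *)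

theory Defs
  imports Main
begin

text \<open>Maps are written on the right. We encode a projection algebra by a carrier
  set P and two binary operations th, de, where th x p stands for x theta_p and
  de x p stands for x delta_p.\<close>

definition proj_alg :: "'a set \<Rightarrow> ('a \<Rightarrow> 'a \<Rightarrow> 'a) \<Rightarrow> ('a \<Rightarrow> 'a \<Rightarrow> 'a) \<Rightarrow> bool" where
  "proj_alg P th de \<longleftrightarrow>
     (\<forall>x\<in>P. \<forall>p\<in>P. th x p \<in> P \<and> de x p \<in> P) \<and>
     (\<forall>p\<in>P. th p p = p \<and> de p p = p) \<and>
     (\<forall>p\<in>P. \<forall>q\<in>P. th p (th q p) = th q p \<and> de p (de q p) = de q p) \<and>
     (\<forall>p\<in>P. \<forall>q\<in>P. \<forall>x\<in>P. th (th x q) (th q p) = th (th x q) p) \<and>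
     (\<forall>p\<in>P. \<forall>q\<in>P. \<forall>x\<in>P. de (de x q) (de q p) = de (de x q) p) \<and>
     (\<forall>p\<in>P. \<forall>x\<in>P. de (th x p) p = th x p \<and> th (de x p) p = de x p) \<and>
     (\<forall>p\<in>P. \<forall>q\<in>P. \<forall>x\<in>P. th (th x (de p q)) p = th (th x q) p) \<and>
     (\<forall>p\<in>P. \<forall>q\<in>P. \<forall>x\<in>P. de (de x (th p q)) p = de (de x q) p)"

definition pa_morph ::
  "'a set \<Rightarrow> ('a \<Rightarrow> 'a \<Rightarrow> 'a) \<Rightarrow> ('a \<Rightarrow> 'a \<Rightarrow> 'a) \<Rightarrow>
   'b set \<Rightarrow> ('b \<Rightarrow> 'b \<Rightarrow> 'b) \<Rightarrow> ('b \<Rightarrow> 'b \<Rightarrow> 'b) \<Rightarrow> ('a \<Rightarrow> 'b) \<Rightarrow> bool" where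
  "pa_morph P th de P' th' de' f \<longleftrightarrow>
     (\<forall>p\<in>P. f p \<in> P') \<and>
     (\<forall>p\<in>P. \<forall>q\<in>P. f (th q p) = th' (f q) (f p) \<and> f (de q p) = de' (f q) (f p))"

definition drc :: "'b set \<Rightarrow> ('b \<Rightarrow> 'b \<Rightarrow> 'b) \<Rightarrow> ('b \<Rightarrow> 'b) \<Rightarrow> ('b \<Rightarrow> 'b) \<Rightarrow> bool" where
  "drc S m D R \<longleftrightarrow>
     (\<forall>a\<in>S. \<forall>b\<in>S. m a b \<in> S) \<and> (\<forall>a\<in>S. D a \<in> S \<and> R a \<in> S) \<and>
     (\<forall>a\<in>S. \<forall>b\<in>S. \<forall>c\<in>S. m (m a b) c = m a (m b c)) \<and>
     (\<forall>a\<in>S. m (D a) a = a \<and> m a (R a) = a) \<and>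
     (\<forall>a\<in>S. \<forall>b\<in>S. D (m a b) = D (m a (D b)) \<and> R (m a b) = R (m (R a) b)) \<and>
     (\<forall>a\<in>S. \<forall>b\<in>S. D (m a b) = m (m (D a) (D (m a b))) (D a) \<and>
                     R (m a b) = m (m (R b) (R (m a b))) (R b)) \<and>
     (\<forall>a\<in>S. R (D a) = D a \<and> D (R a) = R a)"

definition drc_morph ::
  "'b set \<Rightarrow> ('b \<Rightarrow> 'b \<Rightarrow> 'b) \<Rightarrow> ('b \<Rightarrow> 'b) \<Rightarrow> ('b \<Rightarrow> 'b) \<Rightarrow>
   'c set \<Rightarrow> ('c \<Rightarrow> 'c \<Rightarrow> 'c) \<Rightarrow> ('c \<Rightarrow> 'c) \<Rightarrow> ('c \<Rightarrow> 'c) \<Rightarrow> ('b \<Rightarrow> 'c) \<Rightarrow> bool" where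
  "drc_morph S m D R S' m' D' R' f \<longleftrightarrow>
     (\<forall>a\<in>S. f a \<in> S') \<and>
     (\<forall>a\<in>S. \<forall>b\<in>S. f (m a b) = m' (f a) (f b)) \<and>
     (\<forall>a\<in>S. f (D a) = D' (f a) \<and> f (R a) = R' (f a))"

text \<open>The forgetful functor: projections of S with q theta_p = R(qp), q delta_p = D(pq).\<close>

definition projs :: "'b set \<Rightarrow> ('b \<Rightarrow> 'b) \<Rightarrow> 'b set" where
  "projs S D = D ` S"

definition proj_th :: "('b \<Rightarrow> 'b \<Rightarrow> 'b) \<Rightarrow> ('b \<Rightarrow> 'b) \<Rightarrow> 'b \<Rightarrow> 'b \<Rightarrow> 'b" where
  "proj_th m R q p = R (m q p)"

definition proj_de :: "('b \<Rightarrow> 'b \<Rightarrow> 'b) \<Rightarrow> ('b \<Rightarrow> 'b) \<Rightarrow> 'b \<Rightarrow> 'b \<Rightarrow> 'b" where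
  "proj_de m D q p = D (m p q)"

text \<open>Words are nonempty lists over P; the letter p stands for the generator x_p.
  fcong is the congruence generated by the defining relations
  x_p x_p = x_p,  x_p x_q = x_p x_{p theta_q},  x_p x_q = x_{q delta_p} x_q.\<close>

inductive_set fcong :: "'a set \<Rightarrow> ('a \<Rightarrow> 'a \<Rightarrow> 'a) \<Rightarrow> ('a \<Rightarrow> 'a \<Rightarrow> 'a) \<Rightarrow> ('a list \<times> 'a list) set"
  for P th de where
  refl: "w \<in> lists P \<Longrightarrow> w \<noteq> [] \<Longrightarrow> (w, w) \<in> fcong P th de"
| sym: "(u, v) \<in> fcong P th de \<Longrightarrow> (v, u) \<in> fcong P th de"
| trans: "(u, v) \<in> fcong P th de \<Longrightarrow> (v, w) \<in> fcong P th de \<Longrightarrow> (u, w) \<in> fcong P th de"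
| idem: "u \<in> lists P \<Longrightarrow> v \<in> lists P \<Longrightarrow> p \<in> P \<Longrightarrow>
          (u @ [p, p] @ v, u @ [p] @ v) \<in> fcong P th de"
| rth: "u \<in> lists P \<Longrightarrow> v \<in> lists P \<Longrightarrow> p \<in> P \<Longrightarrow> q \<in> P \<Longrightarrow>
          (u @ [p, q] @ v, u @ [p, th p q] @ v) \<in> fcong P th de"
| rde: "u \<in> lists P \<Longrightarrow> v \<in> lists P \<Longrightarrow> p \<in> P \<Longrightarrow> q \<in> P \<Longrightarrow>
          (u @ [p, q] @ v, u @ [de q p, q] @ v) \<in> fcong P th de"

definition fwords :: "'a set \<Rightarrow> 'a list set" where
  "fwords P = {w. w \<in> lists P \<and> w \<noteq> []}"

definition fcarrier :: "'a set \<Rightarrow> ('a \<Rightarrow> 'a \<Rightarrow> 'a) \<Rightarrow> ('a \<Rightarrow> 'a \<Rightarrow> 'a) \<Rightarrow> 'a list set set" where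
  "fcarrier P th de = fwords P // fcong P th de"

definition fclass :: "'a set \<Rightarrow> ('a \<Rightarrow> 'a \<Rightarrow> 'a) \<Rightarrow> ('a \<Rightarrow> 'a \<Rightarrow> 'a) \<Rightarrow> 'a list \<Rightarrow> 'a list set" where
  "fclass P th de w = fcong P th de `` {w}"

definition fmult :: "'a set \<Rightarrow> ('a \<Rightarrow> 'a \<Rightarrow> 'a) \<Rightarrow> ('a \<Rightarrow> 'a \<Rightarrow> 'a) \<Rightarrow>
     'a list set \<Rightarrow> 'a list set \<Rightarrow> 'a list set" where
  "fmult P th de c1 c2 = fcong P th de `` {w1 @ w2 | w1 w2. w1 \<in> c1 \<and> w2 \<in> c2}"

definition frel :: "('a \<Rightarrow> 'a \<Rightarrow> 'a) \<Rightarrow> ('a \<Rightarrow> 'a \<Rightarrow> 'a) \<Rightarrow> 'a \<Rightarrow> 'a \<Rightarrow> bool" where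
  "frel th de p q \<longleftrightarrow> p = de q p \<and> q = th p q"

definition fchain :: "'a set \<Rightarrow> ('a \<Rightarrow> 'a \<Rightarrow> 'a) \<Rightarrow> ('a \<Rightarrow> 'a \<Rightarrow> 'a) \<Rightarrow> 'a list \<Rightarrow> bool" where
  "fchain P th de w \<longleftrightarrow> w \<in> fwords P \<and>
     (\<forall>i. Suc i < length w \<longrightarrow> frel th de (w ! i) (w ! Suc i))"

definition fD :: "'a set \<Rightarrow> ('a \<Rightarrow> 'a \<Rightarrow> 'a) \<Rightarrow> ('a \<Rightarrow> 'a \<Rightarrow> 'a) \<Rightarrow> 'a list set \<Rightarrow> 'a list set" where
  "fD P th de c = fclass P th de [THE p. \<exists>w\<in>c. fchain P th de w \<and> hd w = p]"

definition fR :: "'a set \<Rightarrow> ('a \<Rightarrow> 'a \<Rightarrow> 'a) \<Rightarrow> ('a \<Rightarrow> 'a \<Rightarrow> 'a) \<Rightarrow> 'a list set \<Rightarrow> 'a list set" where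
  "fR P th de c = fclass P th de [THE p. \<exists>w\<in>c. fchain P th de w \<and> last w = p]"

definition fmap :: "'b set \<Rightarrow> ('b \<Rightarrow> 'b \<Rightarrow> 'b) \<Rightarrow> ('b \<Rightarrow> 'b \<Rightarrow> 'b) \<Rightarrow> ('a \<Rightarrow> 'b) \<Rightarrow>
     'a list set \<Rightarrow> 'b list set" where
  "fmap P' th' de' f c = fcong P' th' de' `` (map f ` c)"

end

theory Submission
  imports Defs
begin

(*
  Two folds along a word are invariant under the
  defining relations: word_D applies the maps \<delta>_p of the letters, from right to left, to the
  last letter, and word_R applies the maps \<theta>_p, from left to right, to the first one.
  Every word is congruent to an F-chain: by induction from the right, a new letter p in front of
  a chain starting with q is replaced by q\<delta>_p, and the relation x_u x_s = x_u x_(u\<theta>_s) is then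
  pushed through the chain from left to right. On an F-chain the two folds return the first and
  the last letter, so D and R of the class of w are the classes of word_D w and word_R w; the
  DRC-axioms and the bijection p \<mapsto> x_p onto the projections become computations with words.
  A morphism f : P \<rightarrow> P(S) extends to F(P) by evaluating x_p1 ... x_pk as f(p1) ... f(pk) in S:
  the defining relations hold there because f preserves \<theta> and \<delta>, and the extension is unique
  because the x_p generate F(P).
*)

section \<open>Words and the defining congruence of F(P)\<close>

definition word_D :: "('a \<Rightarrow> 'a \<Rightarrow> 'a) \<Rightarrow> 'a list \<Rightarrow> 'a" where
  "word_D de w = foldr (\<lambda>p x. de x p) (butlast w) (last w)"

definition word_R :: "('a \<Rightarrow> 'a \<Rightarrow> 'a) \<Rightarrow> 'a list \<Rightarrow> 'a" where
  "word_R th w = foldl th (hd w) (tl w)"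

lemma word_D_singleton [simp]: "word_D de [p] = p"
  by (simp add: word_D_def)

lemma word_D_append: "v \<noteq> [] \<Longrightarrow> word_D de (u @ v) = foldr (\<lambda>p x. de x p) u (word_D de v)"
  by (simp add: word_D_def butlast_append)

lemma word_D_Cons: "v \<noteq> [] \<Longrightarrow> word_D de (p # v) = de (word_D de v) p"
  using word_D_append[of v de "[p]"] by simp

lemma word_R_singleton [simp]: "word_R th [p] = p"
  by (simp add: word_R_def)

lemma word_R_append: "u \<noteq> [] \<Longrightarrow> word_R th (u @ v) = foldl th (word_R th u) v"
  by (cases u) (simp_all add: word_R_def)

lemma word_R_snoc: "u \<noteq> [] \<Longrightarrow> word_R th (u @ [q]) = th (word_R th u) q"
  by (simp add: word_R_append)

lemma word_R_conv_word_D: "w \<noteq> [] \<Longrightarrow> word_R th w = word_D th (rev w)"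
  by (cases w) (simp_all add: word_R_def word_D_def butlast_append foldl_conv_foldr)

fun th_scan :: "('a \<Rightarrow> 'a \<Rightarrow> 'a) \<Rightarrow> 'a \<Rightarrow> 'a list \<Rightarrow> 'a list" where
  "th_scan th u [] = [u]"
| "th_scan th u (s # ss) = u # th_scan th (th u s) ss"

lemma th_scan_Cons: "th_scan th u ss = u # tl (th_scan th u ss)"
  by (cases ss) simp_all

lemma frel_swap: "frel de th q p \<longleftrightarrow> frel th de p q"
  by (auto simp: frel_def)

lemma fchain_iff: "fchain P th de w \<longleftrightarrow> w \<in> fwords P \<and> successively (frel th de) w"
  by (simp add: fchain_def successively_conv_nth)

lemma chain_word_D: "successively (frel th de) w \<Longrightarrow> w \<noteq> [] \<Longrightarrow> word_D de w = hd w"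
  by (induction w rule: induct_list012) (auto simp: word_D_Cons frel_def)

lemma chain_word_R: "successively (frel th de) w \<Longrightarrow> w \<noteq> [] \<Longrightarrow> word_R th w = last w"
  using chain_word_D[of de th "rev w"] by (simp add: word_R_conv_word_D frel_swap hd_rev)

declare fcong.trans [trans]

lemma fcong_rev: "(u, v) \<in> fcong P th de \<Longrightarrow> (rev u, rev v) \<in> fcong P de th"
proof (induction rule: fcong.induct)
  case (idem u v p)
  then show ?case
    using fcong.idem[of "rev v" P "rev u" p, where th=de and de=th]
    by (simp add: in_lists_conv_set)
next
  case (rth u v p q)
  then show ?case
    using fcong.rde[of "rev v" P "rev u" q p, where th=de and de=th]
    by (simp add: in_lists_conv_set)
next
  case (rde u v p q)
  then show ?case
    using fcong.rth[of "rev v" P "rev u" q p, where th=de and de=th]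
    by (simp add: in_lists_conv_set)
qed (auto intro: fcong.intros)

lemma mem_fclass: "v \<in> fclass P th de u \<longleftrightarrow> (u, v) \<in> fcong P th de"
  by (simp add: fclass_def)

lemma fclass_eq: "(u, v) \<in> fcong P th de \<Longrightarrow> fclass P th de u = fclass P th de v"
  unfolding fclass_def by (auto intro: fcong.trans fcong.sym)

lemma fclass_self: "w \<in> fwords P \<Longrightarrow> w \<in> fclass P th de w"
  by (auto simp: mem_fclass fwords_def intro: fcong.refl)

lemma fcarrier_iff: "c \<in> fcarrier P th de \<longleftrightarrow> (\<exists>w\<in>fwords P. c = fclass P th de w)"
  by (auto simp: fcarrier_def quotient_def fclass_def)

lemma fclass_in_fcarrier: "w \<in> fwords P \<Longrightarrow> fclass P th de w \<in> fcarrier P th de"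
  by (auto simp: fcarrier_iff)

lemma ball_fcarrier: "(\<forall>c\<in>fcarrier P th de. Q c) \<longleftrightarrow> (\<forall>w\<in>fwords P. Q (fclass P th de w))"
  by (metis fcarrier_iff)

lemma singleton_fwords: "p \<in> P \<Longrightarrow> [p] \<in> fwords P"
  by (simp add: fwords_def)

lemma Cons_fwords: "p # v \<in> fwords P \<longleftrightarrow> p \<in> P \<and> v \<in> lists P"
  by (simp add: fwords_def)

lemma append_fwords: "u \<in> fwords P \<Longrightarrow> v \<in> fwords P \<Longrightarrow> u @ v \<in> fwords P"
  by (simp add: fwords_def)

lemma pa_morph_swap: "pa_morph P de th P' de' th' f \<longleftrightarrow> pa_morph P th de P' th' de' f"
  by (auto simp: pa_morph_def)

lemma map_fcong:
  assumes f: "pa_morph P th de P' th' de' f" and uv: "(u, v) \<in> fcong P th de"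
  shows "(map f u, map f v) \<in> fcong P' th' de'"
  using uv
proof (induction rule: fcong.induct)
  case (refl w)
  then show ?case
    using f by (auto simp: pa_morph_def intro!: fcong.refl)
next
  case (idem u v p)
  then show ?case
    using f fcong.idem[of "map f u" P' "map f v" "f p", where th=th' and de=de']
    by (auto simp: pa_morph_def in_lists_conv_set)
next
  case (rth u v p q)
  then show ?case
    using f fcong.rth[of "map f u" P' "map f v" "f p" "f q", where th=th' and de=de']
    by (auto simp: pa_morph_def in_lists_conv_set)
next
  case (rde u v p q)
  then show ?case
    using f fcong.rde[of "map f u" P' "map f v" "f p" "f q", where th=th' and de=de']
    by (auto simp: pa_morph_def in_lists_conv_set)
qed (auto intro: fcong.sym fcong.trans)

lemma fmap_fclass:
  assumes f: "pa_morph P th de P' th' de' f" and w: "w \<in> fwords P"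
  shows "fmap P' th' de' f (fclass P th de w) = fclass P' th' de' (map f w)"
proof (intro equalityI subsetI)
  fix x assume "x \<in> fmap P' th' de' f (fclass P th de w)"
  then obtain w' where "(w, w') \<in> fcong P th de" "(map f w', x) \<in> fcong P' th' de'"
    by (auto simp: fmap_def mem_fclass)
  then show "x \<in> fclass P' th' de' (map f w)"
    using map_fcong[OF f] by (auto simp: mem_fclass intro: fcong.trans)
next
  fix x assume "x \<in> fclass P' th' de' (map f w)"
  moreover have "map f w \<in> map f ` fclass P th de w"
    using fclass_self[OF w] by blast
  ultimately show "x \<in> fmap P' th' de' f (fclass P th de w)"
    by (auto simp: fmap_def mem_fclass)
qed

section \<open>Projection algebras and the free DRC-semigroup\<close>

lemma proj_alg_swap: "proj_alg P de th \<longleftrightarrow> proj_alg P th de"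
  unfolding proj_alg_def by blast

locale proj_algebra =
  fixes P :: "'a set" and th de :: "'a \<Rightarrow> 'a \<Rightarrow> 'a"
  assumes proj_alg: "proj_alg P th de"

(* Reversing words exchanges \<theta> and \<delta> (fcong_rev, word_R_conv_word_D), so every statement about
   \<theta> and word_R is obtained from its mirror image about \<delta> and word_D in the dual algebra. *)
sublocale proj_algebra \<subseteq> dual: proj_algebra P de th
  by (rule proj_algebra.intro) (subst proj_alg_swap, rule proj_alg)

context proj_algebra
begin

lemma th_closed: "x \<in> P \<Longrightarrow> p \<in> P \<Longrightarrow> th x p \<in> P"
  and de_closed: "x \<in> P \<Longrightarrow> p \<in> P \<Longrightarrow> de x p \<in> P"
  and de_self: "p \<in> P \<Longrightarrow> de p p = p"
  and de_absorb: "p \<in> P \<Longrightarrow> q \<in> P \<Longrightarrow> de p (de q p) = de q p"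
  and de_de_de: "p \<in> P \<Longrightarrow> q \<in> P \<Longrightarrow> x \<in> P \<Longrightarrow> de (de x q) (de q p) = de (de x q) p"
  and de_th_self: "p \<in> P \<Longrightarrow> x \<in> P \<Longrightarrow> de (th x p) p = th x p"
  and th_de_self: "p \<in> P \<Longrightarrow> x \<in> P \<Longrightarrow> th (de x p) p = de x p"
  and de_de_th: "p \<in> P \<Longrightarrow> q \<in> P \<Longrightarrow> x \<in> P \<Longrightarrow> de (de x (th p q)) p = de (de x q) p"
  using proj_alg unfolding proj_alg_def by blast+

lemma de_idem: "p \<in> P \<Longrightarrow> x \<in> P \<Longrightarrow> de (de x p) p = de x p"
  by (metis th_de_self de_th_self de_closed)

lemma de_fixed_iff_th_fixed: "x \<in> P \<Longrightarrow> z \<in> P \<Longrightarrow> de x z = x \<longleftrightarrow> th x z = x"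
  by (metis de_th_self th_de_self)

lemma de_left_absorb: "p \<in> P \<Longrightarrow> q \<in> P \<Longrightarrow> de q (de q p) = de q p"
  by (metis de_self de_de_de)

lemma de_th_left: "p \<in> P \<Longrightarrow> q \<in> P \<Longrightarrow> de (th p q) p = de q p"
  by (metis de_self de_absorb de_th_self de_de_th th_closed)

lemma de_fixed_under_de:
  "y \<in> P \<Longrightarrow> z \<in> P \<Longrightarrow> p \<in> P \<Longrightarrow> de y z = y \<Longrightarrow> de (de y p) (de z p) = de y p"
  by (metis de_closed de_idem de_de_de)

end

context proj_algebra
begin

lemma de_fixed_under_th:
  "u \<in> P \<Longrightarrow> s \<in> P \<Longrightarrow> t \<in> P \<Longrightarrow> de s u = u \<Longrightarrow> de t s = s \<Longrightarrow> de t (th u s) = th u s"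
  by (smt (verit) de_absorb de_th_self de_de_th th_closed de_idem dual.de_idem)

lemma fcong_fwords: "(u, v) \<in> fcong P th de \<Longrightarrow> u \<in> fwords P \<and> v \<in> fwords P"
  by (induction rule: fcong.induct) (auto simp: fwords_def th_closed de_closed)

lemma fcong_extend:
  assumes "(u, v) \<in> fcong P th de" and "w \<in> lists P"
  shows "(w @ u, w @ v) \<in> fcong P th de \<and> (u @ w, v @ w) \<in> fcong P th de"
  using assms
proof (induction rule: fcong.induct)
  case (idem u v p)
  then show ?case
    using fcong.idem[of "w @ u" P v p] fcong.idem[of u P "v @ w" p] by auto
next
  case (rth u v p q)
  then show ?case
    using fcong.rth[of "w @ u" P v p q] fcong.rth[of u P "v @ w" p q] by auto
next
  case (rde u v p q)
  then show ?case
    using fcong.rde[of "w @ u" P v p q] fcong.rde[of u P "v @ w" p q] by auto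
qed (auto intro!: fcong.refl intro: fcong.sym fcong.trans)

lemma fcong_append:
  assumes u: "(u, u') \<in> fcong P th de" and v: "(v, v') \<in> fcong P th de"
  shows "(u @ v, u' @ v') \<in> fcong P th de"
proof -
  have "(u @ v, u' @ v) \<in> fcong P th de"
    using fcong_extend[OF u] fcong_fwords[OF v] by (simp add: fwords_def)
  moreover have "(u' @ v, u' @ v') \<in> fcong P th de"
    using fcong_extend[OF v] fcong_fwords[OF u] by (simp add: fwords_def)
  ultimately show ?thesis
    by (rule fcong.trans)
qed

lemma fmult_fclass:
  assumes "u \<in> fwords P" and "v \<in> fwords P"
  shows "fmult P th de (fclass P th de u) (fclass P th de v) = fclass P th de (u @ v)"
proof (intro equalityI subsetI)
  fix x assume "x \<in> fmult P th de (fclass P th de u) (fclass P th de v)"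
  then show "x \<in> fclass P th de (u @ v)"
    by (auto simp: fmult_def mem_fclass intro: fcong.trans fcong_append)
next
  fix x assume "x \<in> fclass P th de (u @ v)"
  moreover have "u @ v \<in> {w1 @ w2 |w1 w2. w1 \<in> fclass P th de u \<and> w2 \<in> fclass P th de v}"
    using fclass_self assms by blast
  ultimately show "x \<in> fmult P th de (fclass P th de u) (fclass P th de v)"
    unfolding fmult_def fclass_def by blast
qed

lemma word_D_in: "w \<in> fwords P \<Longrightarrow> word_D de w \<in> P"
  by (induction w rule: induct_list012) (auto simp: fwords_def word_D_Cons de_closed)

lemma word_D_context:
  assumes "x \<in> fwords P" "y \<in> fwords P" "u \<in> lists P" "v \<in> lists P"
    and "word_D de x = word_D de y"
    and "\<And>z. z \<in> P \<Longrightarrow> word_D de (x @ [z]) = word_D de (y @ [z])"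
  shows "word_D de (u @ x @ v) = word_D de (u @ y @ v)"
proof -
  have "word_D de (x @ v) = word_D de (y @ v)"
  proof (cases "v = []")
    case False
    then have "word_D de v \<in> P"
      using assms(4) by (simp add: word_D_in fwords_def)
    then show ?thesis
      using assms(6)[of "word_D de v"] False by (simp add: word_D_append)
  qed (simp add: assms(5))
  then show ?thesis
    using assms(1,2) by (simp add: word_D_append fwords_def)
qed

lemma word_D_fcong: "(u, v) \<in> fcong P th de \<Longrightarrow> word_D de u = word_D de v"
proof (induction rule: fcong.induct)
  case (idem u v p)
  then show ?case
    by (intro word_D_context) (auto simp: fwords_def word_D_Cons de_self de_idem)
next
  case (rth u v p q)
  then show ?case
    by (intro word_D_context) (auto simp: fwords_def word_D_Cons de_de_th de_th_left th_closed)
next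
  case (rde u v p q)
  then show ?case
    by (intro word_D_context) (auto simp: fwords_def word_D_Cons de_de_de de_left_absorb de_closed)
qed auto

lemma word_D_append_fixed:
  assumes "u \<in> fwords P" and "v \<in> fwords P"
  shows "de (word_D de (u @ v)) (word_D de u) = word_D de (u @ v)"
  using assms(1)
proof (induction u)
  case (Cons p u)
  show ?case
  proof (cases "u = []")
    case True
    then show ?thesis
      using Cons assms(2) by (simp add: fwords_def word_D_Cons de_idem word_D_in)
  next
    case False
    then show ?thesis
      using Cons assms(2) by (simp add: fwords_def word_D_Cons de_fixed_under_de word_D_in)
  qed
qed (simp add: fwords_def)

lemma th_scan_fcong: "u \<in> P \<Longrightarrow> ss \<in> lists P \<Longrightarrow> (u # ss, th_scan th u ss) \<in> fcong P th de"
proof (induction ss arbitrary: u)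
  case Nil
  then show ?case by (auto intro: fcong.refl)
next
  case (Cons s ss)
  have "(u # s # ss, u # th u s # ss) \<in> fcong P th de"
    using Cons.prems fcong.rth[of "[]" P ss u s] by simp
  also have "(u # th u s # ss, u # th_scan th (th u s) ss) \<in> fcong P th de"
    using Cons fcong_extend[of _ _ "[u]"] th_closed by simp
  finally show ?case
    by simp
qed

lemma th_scan_chain:
  "u \<in> P \<Longrightarrow> ss \<in> lists P \<Longrightarrow> successively (\<lambda>x y. de y x = x) (u # ss) \<Longrightarrow>
   successively (frel th de) (th_scan th u ss)"
proof (induction ss arbitrary: u)
  case (Cons s ss)
  then have "de s u = u" and "successively (\<lambda>x y. de y x = x) (s # ss)"
    by simp_all
  then have "successively (\<lambda>x y. de y x = x) (th u s # ss)"
    using Cons.prems by (cases ss) (auto simp: de_fixed_under_th)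
  then have "successively (frel th de) (th_scan th (th u s) ss)"
    using Cons th_closed by simp
  moreover have "frel th de u (th u s)"
    using Cons.prems \<open>de s u = u\<close> by (simp add: frel_def de_th_left dual.de_left_absorb)
  ultimately show ?case
    by (metis th_scan.simps(2) th_scan_Cons successively.simps(3))
qed simp

lemma fcong_chain: "w \<in> fwords P \<Longrightarrow> \<exists>c. (w, c) \<in> fcong P th de \<and> fchain P th de c"
proof (induction w)
  case (Cons p v)
  show ?case
  proof (cases "v = []")
    case True
    then show ?thesis
      using Cons.prems
      by (intro exI[of _ "[p]"]) (auto simp: fchain_iff fwords_def intro: fcong.refl)
  next
    case False
    with Cons obtain c where vc: "(v, c) \<in> fcong P th de" and "fchain P th de c"
      by (auto simp: fwords_def)
    then obtain q cs where c: "c = q # cs" and "successively (frel th de) (q # cs)"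
      and "q \<in> P" "cs \<in> lists P" and "p \<in> P"
      using Cons.prems by (cases c) (auto simp: fchain_iff fwords_def)
    define p' where "p' = de q p"
    have "p' \<in> P" and "c \<in> lists P"
      using c \<open>p \<in> P\<close> \<open>q \<in> P\<close> \<open>cs \<in> lists P\<close> by (simp_all add: p'_def de_closed)
    have "(p # v, p # c) \<in> fcong P th de"
      using fcong_extend[OF vc, of "[p]"] \<open>p \<in> P\<close> by simp
    also have "(p # c, p' # c) \<in> fcong P th de"
      using fcong.rde[of "[]" P cs p q] c \<open>p \<in> P\<close> \<open>q \<in> P\<close> \<open>cs \<in> lists P\<close>
      by (simp add: p'_def)
    also have "(p' # c, th_scan th p' c) \<in> fcong P th de"
      using \<open>p' \<in> P\<close> \<open>c \<in> lists P\<close> by (rule th_scan_fcong)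
    finally have "(p # v, th_scan th p' c) \<in> fcong P th de" .
    moreover have "successively (\<lambda>x y. de y x = x) (p' # c)"
      using \<open>successively (frel th de) (q # cs)\<close> c \<open>p \<in> P\<close> \<open>q \<in> P\<close>
      by (auto simp: p'_def de_left_absorb frel_def elim: successively_mono)
    then have "successively (frel th de) (th_scan th p' c)"
      using th_scan_chain \<open>p' \<in> P\<close> \<open>c \<in> lists P\<close> by blast
    ultimately show ?thesis
      using fcong_fwords fchain_iff by blast
  qed
qed (simp add: fwords_def)

lemma fclass_chain_end:
  assumes inv: "\<And>u v. (u, v) \<in> fcong P th de \<Longrightarrow> h u = h v"
    and chain_end: "\<And>c. fchain P th de c \<Longrightarrow> h c = e c"
    and w: "w \<in> fwords P"
  shows "(THE p. \<exists>w'\<in>fclass P th de w. fchain P th de w' \<and> e w' = p) = h w"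
proof (rule the_equality)
  obtain c where "(w, c) \<in> fcong P th de" and "fchain P th de c"
    using fcong_chain[OF w] by blast
  then show "\<exists>w'\<in>fclass P th de w. fchain P th de w' \<and> e w' = h w"
    using inv chain_end by (metis mem_fclass)
next
  fix p assume "\<exists>w'\<in>fclass P th de w. fchain P th de w' \<and> e w' = p"
  then show "p = h w"
    using inv chain_end by (metis mem_fclass)
qed

lemma fD_fclass:
  assumes "w \<in> fwords P"
  shows "fD P th de (fclass P th de w) = fclass P th de [word_D de w]"
proof -
  have "(THE p. \<exists>w'\<in>fclass P th de w. fchain P th de w' \<and> hd w' = p) = word_D de w"
    by (rule fclass_chain_end[OF word_D_fcong _ assms])
      (auto simp: fchain_iff fwords_def chain_word_D)
  then show ?thesis
    by (simp add: fD_def)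
qed

lemma word_D_Cons_fcong: "w \<in> fwords P \<Longrightarrow> (word_D de w # w, w) \<in> fcong P th de"
proof -
  assume w: "w \<in> fwords P"
  then obtain c where wc: "(w, c) \<in> fcong P th de" and "fchain P th de c"
    using fcong_chain by blast
  then have "word_D de w = hd c"
    using word_D_fcong chain_word_D by (auto simp: fchain_iff fwords_def)
  obtain q cs where c: "c = q # cs" and "q \<in> P" "cs \<in> lists P"
    using \<open>fchain P th de c\<close> by (cases c) (auto simp: fchain_iff fwords_def)
  have "(word_D de w # w, q # c) \<in> fcong P th de"
    using fcong_extend[OF wc, of "[q]"] \<open>word_D de w = hd c\<close> c \<open>q \<in> P\<close> by simp
  also have "(q # c, c) \<in> fcong P th de"
    using fcong.idem[of "[]" P cs q] c \<open>q \<in> P\<close> \<open>cs \<in> lists P\<close> by simp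
  also have "(c, w) \<in> fcong P th de"
    using wc by (rule fcong.sym)
  finally show ?thesis .
qed

lemma sandwich_fcong:
  assumes "x \<in> P" "z \<in> P" "de x z = x"
  shows "([z, x, z], [x]) \<in> fcong P th de"
proof -
  have "th x z = x"
    using assms de_fixed_iff_th_fixed by blast
  have "([z, x, z], [x, x, z]) \<in> fcong P th de"
    using fcong.rde[of "[]" P "[z]" z x, where th=th and de=de] assms by simp
  also have "([x, x, z], [x, z]) \<in> fcong P th de"
    using fcong.idem[of "[]" P "[z]" x] assms by simp
  also have "([x, z], [x, x]) \<in> fcong P th de"
    using fcong.rth[of "[]" P "[]" x z, where th=th and de=de] assms \<open>th x z = x\<close> by simp
  also have "([x, x], [x]) \<in> fcong P th de"
    using fcong.idem[of "[]" P "[]" x] assms by simp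
  finally show ?thesis .
qed

lemma word_D_map:
  assumes f: "pa_morph P th de P' th' de' f"
  shows "w \<in> fwords P \<Longrightarrow> word_D de' (map f w) = f (word_D de w)"
proof (induction w rule: induct_list012)
  case (3 p q v)
  then show ?case
    using f word_D_in[of "q # v"] by (simp add: word_D_Cons fwords_def pa_morph_def)
qed (simp_all add: fwords_def)

end

context proj_algebra
begin

lemma word_R_in: "w \<in> fwords P \<Longrightarrow> word_R th w \<in> P"
  using dual.word_D_in[of "rev w"]
  by (simp add: word_R_conv_word_D fwords_def in_lists_conv_set)

lemma word_R_fcong: "(u, v) \<in> fcong P th de \<Longrightarrow> word_R th u = word_R th v"
  using dual.word_D_fcong[OF fcong_rev] fcong_fwords
  by (simp add: word_R_conv_word_D fwords_def in_lists_conv_set)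

lemma word_R_append_fixed:
  "u \<in> fwords P \<Longrightarrow> v \<in> fwords P \<Longrightarrow> th (word_R th (u @ v)) (word_R th v) = word_R th (u @ v)"
  using dual.word_D_append_fixed[of "rev v" "rev u"]
  by (simp add: word_R_conv_word_D fwords_def in_lists_conv_set)

lemma fR_fclass:
  assumes "w \<in> fwords P"
  shows "fR P th de (fclass P th de w) = fclass P th de [word_R th w]"
proof -
  have "(THE p. \<exists>w'\<in>fclass P th de w. fchain P th de w' \<and> last w' = p) = word_R th w"
    by (rule fclass_chain_end[OF word_R_fcong _ assms])
      (auto simp: fchain_iff fwords_def chain_word_R)
  then show ?thesis
    by (simp add: fR_def)
qed

lemma append_word_R_fcong: "w \<in> fwords P \<Longrightarrow> (w @ [word_R th w], w) \<in> fcong P th de"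
  using fcong_rev[OF dual.word_D_Cons_fcong[of "rev w"]]
  by (simp add: word_R_conv_word_D fwords_def in_lists_conv_set)

lemma drc_fcarrier: "drc (fcarrier P th de) (fmult P th de) (fD P th de) (fR P th de)"
  unfolding drc_def ball_fcarrier
proof (intro conjI ballI)
  fix a b c assume w: "a \<in> fwords P" "b \<in> fwords P" "c \<in> fwords P"
  note simps = fmult_fclass fD_fclass fR_fclass append_fwords singleton_fwords Cons_fwords
    word_D_in word_R_in w
  show "fmult P th de (fclass P th de a) (fclass P th de b) \<in> fcarrier P th de"
    by (simp add: simps fclass_in_fcarrier)
  show "fmult P th de (fmult P th de (fclass P th de a) (fclass P th de b)) (fclass P th de c) =
        fmult P th de (fclass P th de a) (fmult P th de (fclass P th de b) (fclass P th de c))"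
    by (simp add: simps)
  show "fD P th de (fmult P th de (fclass P th de a) (fclass P th de b)) =
        fD P th de (fmult P th de (fclass P th de a) (fD P th de (fclass P th de b)))"
    using w by (simp add: simps word_D_append fwords_def)
  show "fR P th de (fmult P th de (fclass P th de a) (fclass P th de b)) =
        fR P th de (fmult P th de (fR P th de (fclass P th de a)) (fclass P th de b))"
    using w word_R_append[of a th b] word_R_append[of "[word_R th a]" th b]
    by (simp add: simps fwords_def)
  show "fD P th de (fmult P th de (fclass P th de a) (fclass P th de b)) =
        fmult P th de (fmult P th de (fD P th de (fclass P th de a))
          (fD P th de (fmult P th de (fclass P th de a) (fclass P th de b))))
          (fD P th de (fclass P th de a))"
    using fclass_eq[OF sandwich_fcong[OF word_D_in word_D_in word_D_append_fixed]]
    by (simp add: simps)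
  show "fR P th de (fmult P th de (fclass P th de a) (fclass P th de b)) =
        fmult P th de (fmult P th de (fR P th de (fclass P th de b))
          (fR P th de (fmult P th de (fclass P th de a) (fclass P th de b))))
          (fR P th de (fclass P th de b))"
    using fclass_eq[OF sandwich_fcong[OF word_R_in word_R_in]] word_R_append_fixed
    by (simp add: simps de_fixed_iff_th_fixed)
next
  fix a assume w: "a \<in> fwords P"
  note simps = fmult_fclass fD_fclass fR_fclass append_fwords singleton_fwords Cons_fwords
    word_D_in word_R_in w
  show "fD P th de (fclass P th de a) \<in> fcarrier P th de"
    and "fR P th de (fclass P th de a) \<in> fcarrier P th de"
    by (simp_all add: simps fclass_in_fcarrier)
  show "fmult P th de (fD P th de (fclass P th de a)) (fclass P th de a) = fclass P th de a"
    using fclass_eq[OF word_D_Cons_fcong[OF w]] by (simp add: simps)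
  show "fmult P th de (fclass P th de a) (fR P th de (fclass P th de a)) = fclass P th de a"
    using fclass_eq[OF append_word_R_fcong[OF w]] by (simp add: simps)
  show "fR P th de (fD P th de (fclass P th de a)) = fD P th de (fclass P th de a)"
    "fD P th de (fR P th de (fclass P th de a)) = fR P th de (fclass P th de a)"
    by (simp_all add: simps)
qed

lemma word_R_map:
  "pa_morph P th de P' th' de' f \<Longrightarrow> w \<in> fwords P \<Longrightarrow> word_R th' (map f w) = f (word_R th w)"
  using dual.word_D_map[of P' de' th' f "rev w"]
  by (simp add: pa_morph_swap word_R_conv_word_D rev_map fwords_def in_lists_conv_set)

lemma fmap_drc_morph:
  assumes P': "proj_alg P' th' de'" and f: "pa_morph P th de P' th' de' f"
  shows "drc_morph (fcarrier P th de) (fmult P th de) (fD P th de) (fR P th de)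
                   (fcarrier P' th' de') (fmult P' th' de') (fD P' th' de') (fR P' th' de')
                   (fmap P' th' de' f)"
proof -
  interpret P': proj_algebra P' th' de' using P' by (rule proj_algebra.intro)
  have map_fwords: "map f w \<in> fwords P'" if "w \<in> fwords P" for w
    using f that by (auto simp: pa_morph_def fwords_def)
  note simps = fmap_fclass[OF f] map_fwords fmult_fclass P'.fmult_fclass append_fwords
    fD_fclass P'.fD_fclass fR_fclass P'.fR_fclass singleton_fwords word_D_in word_R_in
    word_D_map[OF f] word_R_map[OF f]
  show ?thesis
    unfolding drc_morph_def ball_fcarrier by (simp add: simps fclass_in_fcarrier)
qed

lemma unit_pa_morph:
  "pa_morph P th de (projs (fcarrier P th de) (fD P th de))
     (proj_th (fmult P th de) (fR P th de)) (proj_de (fmult P th de) (fD P th de))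
     (\<lambda>p. fclass P th de [p])"
  unfolding pa_morph_def projs_def proj_th_def proj_de_def
proof (intro conjI ballI)
  fix p assume "p \<in> P"
  then have "fclass P th de [p] = fD P th de (fclass P th de [p])"
    by (simp add: fD_fclass singleton_fwords)
  then show "fclass P th de [p] \<in> fD P th de ` fcarrier P th de"
    using fclass_in_fcarrier[OF singleton_fwords[OF \<open>p \<in> P\<close>]] by blast
next
  fix p q assume "p \<in> P" "q \<in> P"
  then show "fclass P th de [th q p] =
      fR P th de (fmult P th de (fclass P th de [q]) (fclass P th de [p]))"
    and "fclass P th de [de q p] =
      fD P th de (fmult P th de (fclass P th de [p]) (fclass P th de [q]))"
    by (simp_all add: fmult_fclass singleton_fwords fR_fclass fD_fclass Cons_fwords
        word_D_Cons word_R_def)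
qed

lemma bij_betw_unit: "bij_betw (\<lambda>p. fclass P th de [p]) P (projs (fcarrier P th de) (fD P th de))"
  unfolding bij_betw_def
proof
  show "inj_on (\<lambda>p. fclass P th de [p]) P"
  proof
    fix p q assume "p \<in> P" "q \<in> P" "fclass P th de [p] = fclass P th de [q]"
    then have "[q] \<in> fclass P th de [p]"
      using fclass_self[of "[q]" P th de] by (simp add: singleton_fwords)
    then have "([p], [q]) \<in> fcong P th de"
      by (simp add: mem_fclass)
    then show "p = q"
      using word_D_fcong by fastforce
  qed
  have "fD P th de (fclass P th de w) \<in> (\<lambda>p. fclass P th de [p]) ` P" if "w \<in> fwords P" for w
    using that by (simp add: fD_fclass word_D_in)
  moreover have "fclass P th de [p] \<in> fD P th de ` fcarrier P th de" if "p \<in> P" for p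
    using that fD_fclass[OF singleton_fwords] fclass_in_fcarrier[OF singleton_fwords]
    by (metis image_eqI word_D_singleton)
  ultimately show "(\<lambda>p. fclass P th de [p]) ` P = projs (fcarrier P th de) (fD P th de)"
    unfolding projs_def by (auto simp: fcarrier_iff)
qed

lemma drc_morph_eq_on_generators:
  assumes g1: "drc_morph (fcarrier P th de) (fmult P th de) (fD P th de) (fR P th de) S m D R g1"
    and g2: "drc_morph (fcarrier P th de) (fmult P th de) (fD P th de) (fR P th de) S m D R g2"
    and gen: "\<forall>p\<in>P. g1 (fclass P th de [p]) = g2 (fclass P th de [p])"
    and c: "c \<in> fcarrier P th de"
  shows "g1 c = g2 c"
proof -
  obtain w where "w \<in> fwords P" and "c = fclass P th de w"
    using c by (auto simp: fcarrier_iff)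
  moreover have "g1 (fclass P th de w) = g2 (fclass P th de w)" if "w \<in> fwords P" for w
    using that
  proof (induction w rule: induct_list012)
    case (3 p q v)
    then have "[p] \<in> fwords P" "q # v \<in> fwords P"
      by (simp_all add: fwords_def)
    then have "fclass P th de (p # q # v) =
        fmult P th de (fclass P th de [p]) (fclass P th de (q # v))"
      and "fclass P th de [p] \<in> fcarrier P th de" "fclass P th de (q # v) \<in> fcarrier P th de"
      by (simp_all add: fmult_fclass fclass_in_fcarrier)
    then show ?case
      using 3 g1 g2 gen by (simp add: drc_morph_def fwords_def)
  qed (use gen in \<open>simp_all add: fwords_def\<close>)
  ultimately show ?thesis
    by simp
qed

end

section \<open>The projection algebra of a DRC-semigroup\<close>

locale drc_semigroup =
  fixes S :: "'b set" and m :: "'b \<Rightarrow> 'b \<Rightarrow> 'b" and D R :: "'b \<Rightarrow> 'b"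
  assumes drc: "drc S m D R"

context drc_semigroup
begin

lemma mult_closed: "a \<in> S \<Longrightarrow> b \<in> S \<Longrightarrow> m a b \<in> S"
  and D_closed: "a \<in> S \<Longrightarrow> D a \<in> S"
  and R_closed: "a \<in> S \<Longrightarrow> R a \<in> S"
  and mult_assoc: "a \<in> S \<Longrightarrow> b \<in> S \<Longrightarrow> c \<in> S \<Longrightarrow> m (m a b) c = m a (m b c)"
  and D_mult_self: "a \<in> S \<Longrightarrow> m (D a) a = a"
  and mult_R_self: "a \<in> S \<Longrightarrow> m a (R a) = a"
  and D_mult_D: "a \<in> S \<Longrightarrow> b \<in> S \<Longrightarrow> D (m a b) = D (m a (D b))"
  and R_R_mult: "a \<in> S \<Longrightarrow> b \<in> S \<Longrightarrow> R (m a b) = R (m (R a) b)"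
  and D_mult_sandwich: "a \<in> S \<Longrightarrow> b \<in> S \<Longrightarrow> D (m a b) = m (m (D a) (D (m a b))) (D a)"
  and R_mult_sandwich: "a \<in> S \<Longrightarrow> b \<in> S \<Longrightarrow> R (m a b) = m (m (R b) (R (m a b))) (R b)"
  and R_D: "a \<in> S \<Longrightarrow> R (D a) = D a"
  and D_R: "a \<in> S \<Longrightarrow> D (R a) = R a"
  using drc unfolding drc_def by blast+

lemma drc_dual: "drc S (\<lambda>a b. m b a) R D"
proof -
  have R_sandwich: "R (m b a) = m (R a) (m (R (m b a)) (R a))" if "a \<in> S" "b \<in> S" for a b
  proof -
    have "R (m b a) = m (m (R a) (R (m b a))) (R a)"
      by (rule R_mult_sandwich[OF that(2,1)])
    also have "\<dots> = m (R a) (m (R (m b a)) (R a))"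
      using that by (simp add: mult_assoc mult_closed R_closed)
    finally show ?thesis .
  qed
  have D_sandwich: "D (m b a) = m (D b) (m (D (m b a)) (D b))" if "a \<in> S" "b \<in> S" for a b
  proof -
    have "D (m b a) = m (m (D b) (D (m b a))) (D b)"
      by (rule D_mult_sandwich[OF that(2,1)])
    also have "\<dots> = m (D b) (m (D (m b a)) (D b))"
      using that by (simp add: mult_assoc mult_closed D_closed)
    finally show ?thesis .
  qed
  show ?thesis
    unfolding drc_def
    by (simp add: mult_closed D_closed R_closed mult_assoc D_mult_self mult_R_self R_D D_R
        R_R_mult[symmetric] D_mult_D[symmetric] R_sandwich[symmetric] D_sandwich[symmetric])
qed

end

(* In the opposite semigroup D and R change roles; this yields the \<delta>-half of the projection
   algebra axioms from the \<theta>-half. *)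
sublocale drc_semigroup \<subseteq> dual: drc_semigroup S "\<lambda>a b. m b a" R D
  by (rule drc_semigroup.intro) (rule drc_dual)

context drc_semigroup
begin

lemma D_D: "a \<in> S \<Longrightarrow> D (D a) = D a"
  using D_R[OF D_closed] R_D by simp

lemma projs_iff: "p \<in> projs S D \<longleftrightarrow> p \<in> S \<and> D p = p"
proof
  assume "p \<in> projs S D"
  then show "p \<in> S \<and> D p = p"
    by (auto simp: projs_def D_D D_closed)
next
  assume "p \<in> S \<and> D p = p"
  then show "p \<in> projs S D"
    unfolding projs_def by (metis image_eqI)
qed

lemma projs_R_eq: "projs S R = projs S D"
proof -
  have "R a \<in> D ` S" and "D a \<in> R ` S" if "a \<in> S" for a
    using that D_R[of a] R_D[of a] R_closed[of a] D_closed[of a] by (metis image_eqI)+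
  then show ?thesis
    unfolding projs_def by blast
qed

lemma proj_mult_self: "p \<in> projs S D \<Longrightarrow> m p p = p"
  by (metis D_mult_self projs_iff)

lemma R_proj: "p \<in> projs S D \<Longrightarrow> R p = p"
  by (metis R_D projs_iff)

lemma idempotent_sandwich:
  assumes "p \<in> S" "m p p = p" "r \<in> S" "r = m (m p r) p"
  shows "m p r = r \<and> m r p = r"
proof
  have "m p r = m p (m (m p r) p)"
    using assms(4) by (rule arg_cong)
  also have "\<dots> = m (m (m p p) r) p"
    using assms(1,3) by (simp add: mult_assoc mult_closed)
  also have "\<dots> = r"
    using assms(2) by (simp flip: assms(4))
  finally show "m p r = r" .
  have "m r p = m (m (m p r) p) p"
    using assms(4) by (rule arg_cong)
  also have "\<dots> = m (m p r) (m p p)"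
    using assms(1,3) by (simp add: mult_assoc mult_closed)
  also have "\<dots> = r"
    using assms(2) by (simp flip: assms(4))
  finally show "m r p = r" .
qed

lemma R_mult_proj_below:
  assumes "a \<in> S" "p \<in> projs S D"
  shows "m p (R (m a p)) = R (m a p) \<and> m (R (m a p)) p = R (m a p)"
proof (rule idempotent_sandwich)
  show "p \<in> S" "m p p = p" "R (m a p) \<in> S"
    using assms by (simp_all add: projs_iff proj_mult_self R_closed mult_closed)
  have "R (m a p) = m (m (R p) (R (m a p))) (R p)"
    using assms by (intro R_mult_sandwich) (simp_all add: projs_iff)
  then show "R (m a p) = m (m p (R (m a p))) p"
    unfolding R_proj[OF assms(2)] .
qed

lemma mult_R_mult_proj:
  assumes "a \<in> S" "q \<in> projs S D"
  shows "m a (R (m a q)) = m a q"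
proof -
  have q: "q \<in> S"
    using assms(2) by (simp add: projs_iff)
  have "m a q = m (m a q) (R (m a q))"
    using assms q by (simp add: mult_R_self mult_closed)
  also have "\<dots> = m a (m q (R (m a q)))"
    using assms q by (simp add: mult_assoc mult_closed R_closed)
  also have "\<dots> = m a (R (m a q))"
    using assms R_mult_proj_below by simp
  finally show ?thesis ..
qed

end

context drc_semigroup
begin

lemma projs_th_closed: "x \<in> projs S D \<Longrightarrow> p \<in> projs S D \<Longrightarrow> proj_th m R x p \<in> projs S D"
  by (simp add: proj_th_def projs_iff R_closed mult_closed D_R)

lemma projs_th_self: "p \<in> projs S D \<Longrightarrow> proj_th m R p p = p"
  by (simp add: proj_th_def proj_mult_self R_proj)

lemma projs_th_absorb:
  "p \<in> projs S D \<Longrightarrow> q \<in> projs S D \<Longrightarrow> proj_th m R p (proj_th m R q p) = proj_th m R q p"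
  by (simp add: proj_th_def R_mult_proj_below dual.D_D projs_iff mult_closed)

lemma projs_th_th_th:
  assumes "x \<in> projs S D" "p \<in> projs S D" "q \<in> projs S D"
  shows "proj_th m R (proj_th m R x q) (proj_th m R q p) = proj_th m R (proj_th m R x q) p"
proof -
  have S: "x \<in> S" "p \<in> S" "q \<in> S" "R (m x q) \<in> S"
    using assms by (simp_all add: projs_iff R_closed mult_closed)
  have "m (R (m x q)) (R (m q p)) = m (m (R (m x q)) q) (R (m q p))"
    using S assms(3) R_mult_proj_below by simp
  also have "\<dots> = m (R (m x q)) (m q (R (m q p)))"
    using S by (simp add: mult_assoc mult_closed R_closed)
  also have "\<dots> = m (R (m x q)) (m q p)"
    using S assms mult_R_mult_proj by simp
  also have "\<dots> = m (m (R (m x q)) q) p"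
    using S by (simp add: mult_assoc)
  also have "\<dots> = m (R (m x q)) p"
    using S assms(3) R_mult_proj_below by simp
  finally show ?thesis
    by (simp add: proj_th_def)
qed

lemma projs_de_th_self:
  "x \<in> projs S D \<Longrightarrow> p \<in> projs S D \<Longrightarrow> proj_de m D (proj_th m R x p) p = proj_th m R x p"
  by (simp add: proj_th_def proj_de_def R_mult_proj_below D_R mult_closed projs_iff)

lemma projs_th_th_de:
  assumes "x \<in> projs S D" "p \<in> projs S D" "q \<in> projs S D"
  shows "proj_th m R (proj_th m R x (proj_de m D p q)) p = proj_th m R (proj_th m R x q) p"
proof -
  have S: "x \<in> S" "p \<in> S" "q \<in> S" "D (m q p) \<in> S"
    using assms by (simp_all add: projs_iff D_closed mult_closed)
  have "R (m (R (m x (D (m q p)))) p) = R (m (m x (D (m q p))) p)"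
    using S by (intro R_R_mult[symmetric]) (simp_all add: mult_closed)
  also have "\<dots> = R (m x (m (D (m q p)) p))"
    using S by (simp add: mult_assoc)
  also have "\<dots> = R (m x (m q p))"
    using S assms(3) dual.mult_R_mult_proj[of p q] by (simp add: projs_R_eq)
  also have "\<dots> = R (m (m x q) p)"
    using S by (simp add: mult_assoc)
  also have "\<dots> = R (m (R (m x q)) p)"
    using S by (intro R_R_mult) (simp_all add: mult_closed)
  finally show ?thesis
    by (simp add: proj_th_def proj_de_def)
qed

end

context drc_semigroup
begin

lemma proj_th_dual: "proj_th (\<lambda>a b. m b a) D = proj_de m D"
  by (simp add: fun_eq_iff proj_th_def proj_de_def)

lemma proj_de_dual: "proj_de (\<lambda>a b. m b a) R = proj_th m R"
  by (simp add: fun_eq_iff proj_th_def proj_de_def)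

lemma proj_alg_projs: "proj_alg (projs S D) (proj_th m R) (proj_de m D)"
proof -
  note de_facts = dual.projs_th_closed dual.projs_th_self dual.projs_th_absorb dual.projs_th_th_th
    dual.projs_de_th_self dual.projs_th_th_de
  show ?thesis
    unfolding proj_alg_def
    by (intro conjI ballI; rule projs_th_closed projs_th_self projs_th_absorb projs_th_th_th
        projs_de_th_self projs_th_th_de de_facts[unfolded projs_R_eq proj_th_dual proj_de_dual];
        assumption)
qed

end

section \<open>The universal property\<close>

lemma drc_morph_pa_morph:
  assumes S: "drc S m D R" and g: "drc_morph S m D R S' m' D' R' g"
  shows "pa_morph (projs S D) (proj_th m R) (proj_de m D)
           (projs S' D') (proj_th m' R') (proj_de m' D') g"
proof -
  interpret drc_semigroup S m D R
    using S by (rule drc_semigroup.intro)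
  have g_in: "\<And>a. a \<in> S \<Longrightarrow> g a \<in> S'"
    and g_mult: "\<And>a b. a \<in> S \<Longrightarrow> b \<in> S \<Longrightarrow> g (m a b) = m' (g a) (g b)"
    and g_D: "\<And>a. a \<in> S \<Longrightarrow> g (D a) = D' (g a)"
    and g_R: "\<And>a. a \<in> S \<Longrightarrow> g (R a) = R' (g a)"
    using g unfolding drc_morph_def by auto
  show ?thesis
    unfolding pa_morph_def proj_th_def proj_de_def
  proof (intro conjI ballI)
    fix p assume "p \<in> projs S D"
    then obtain a where "a \<in> S" "p = D a"
      by (auto simp: projs_def)
    then show "g p \<in> projs S' D'"
      using g_in g_D by (simp add: projs_def)
  next
    fix p q assume "p \<in> projs S D" "q \<in> projs S D"
    then have "p \<in> S" "q \<in> S"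
      by (simp_all add: projs_iff)
    then show "g (R (m q p)) = R' (m' (g q) (g p))" and "g (D (m p q)) = D' (m' (g p) (g q))"
      by (simp_all add: g_mult g_D g_R mult_closed)
  qed
qed

definition word_eval :: "('b \<Rightarrow> 'b \<Rightarrow> 'b) \<Rightarrow> ('a \<Rightarrow> 'b) \<Rightarrow> 'a list \<Rightarrow> 'b" where
  "word_eval m f w = foldr (\<lambda>p x. m (f p) x) (butlast w) (f (last w))"

lemma word_eval_singleton [simp]: "word_eval m f [p] = f p"
  by (simp add: word_eval_def)

lemma word_eval_Cons: "v \<noteq> [] \<Longrightarrow> word_eval m f (p # v) = m (f p) (word_eval m f v)"
  by (simp add: word_eval_def)

definition free_ext :: "('b \<Rightarrow> 'b \<Rightarrow> 'b) \<Rightarrow> ('a \<Rightarrow> 'b) \<Rightarrow> 'a list set \<Rightarrow> 'b" where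
  "free_ext m f c = word_eval m f (SOME w. w \<in> c)"

locale free_extension = proj_algebra P th de + drc_semigroup S m D R
  for P :: "'a set" and th de and S :: "'b set" and m D R +
  fixes f :: "'a \<Rightarrow> 'b"
  assumes f_morph: "pa_morph P th de (projs S D) (proj_th m R) (proj_de m D) f"
begin

lemma f_projs: "p \<in> P \<Longrightarrow> f p \<in> projs S D"
  and f_th: "p \<in> P \<Longrightarrow> q \<in> P \<Longrightarrow> f (th q p) = R (m (f q) (f p))"
  and f_de: "p \<in> P \<Longrightarrow> q \<in> P \<Longrightarrow> f (de q p) = D (m (f p) (f q))"
  using f_morph unfolding pa_morph_def proj_th_def proj_de_def by auto

lemma f_in: "p \<in> P \<Longrightarrow> f p \<in> S"
  and f_D: "p \<in> P \<Longrightarrow> D (f p) = f p"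
  using f_projs by (simp_all add: projs_iff)

lemma word_eval_in: "w \<in> fwords P \<Longrightarrow> word_eval m f w \<in> S"
  by (induction w rule: induct_list012) (auto simp: fwords_def word_eval_Cons f_in mult_closed)

lemma word_eval_append:
  assumes "u \<in> fwords P" and "v \<in> fwords P"
  shows "word_eval m f (u @ v) = m (word_eval m f u) (word_eval m f v)"
  using assms(1)
proof (induction u rule: induct_list012)
  case (2 p)
  then show ?case
    using assms(2) by (simp add: fwords_def word_eval_Cons)
next
  case (3 p q u)
  then show ?case
    using assms(2) word_eval_in[of "q # u"] word_eval_in[OF assms(2)]
    by (simp add: fwords_def word_eval_Cons f_in mult_assoc)
qed (simp add: fwords_def)

lemma word_eval_context:
  assumes "x \<in> fwords P" "y \<in> fwords P" "u \<in> lists P" "v \<in> lists P"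
    and "word_eval m f x = word_eval m f y"
  shows "word_eval m f (u @ x @ v) = word_eval m f (u @ y @ v)"
proof -
  have "word_eval m f (x @ v) = word_eval m f (y @ v)"
    using assms by (cases "v = []") (simp_all add: word_eval_append fwords_def)
  then show ?thesis
    using assms by (cases "u = []") (simp_all add: word_eval_append fwords_def)
qed

lemma word_eval_fcong: "(u, v) \<in> fcong P th de \<Longrightarrow> word_eval m f u = word_eval m f v"
proof (induction rule: fcong.induct)
  case (idem u v p)
  then show ?case
    by (intro word_eval_context) (auto simp: fwords_def word_eval_Cons f_projs proj_mult_self)
next
  case (rth u v p q)
  then show ?case
    by (intro word_eval_context)
      (auto simp: fwords_def word_eval_Cons f_th f_in f_projs mult_R_mult_proj th_closed)
next
  case (rde u v p q)
  then show ?case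
    using dual.mult_R_mult_proj[of "f q" "f p"]
    by (intro word_eval_context)
      (auto simp: fwords_def word_eval_Cons f_de f_in f_projs projs_R_eq de_closed)
qed auto

lemma D_word_eval: "w \<in> fwords P \<Longrightarrow> D (word_eval m f w) = f (word_D de w)"
proof (induction w rule: induct_list012)
  case (3 p q v)
  then have "p \<in> P" "q # v \<in> fwords P"
    by (simp_all add: fwords_def)
  then have "D (word_eval m f (p # q # v)) = D (m (f p) (D (word_eval m f (q # v))))"
    by (simp add: word_eval_Cons D_mult_D f_in word_eval_in)
  also have "\<dots> = f (de (word_D de (q # v)) p)"
    using 3 \<open>p \<in> P\<close> \<open>q # v \<in> fwords P\<close> by (simp add: f_de word_D_in)
  finally show ?case
    by (simp add: word_D_Cons)
qed (simp_all add: fwords_def f_D)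

lemma R_word_eval: "w \<in> fwords P \<Longrightarrow> R (word_eval m f w) = f (word_R th w)"
proof (induction w rule: rev_induct)
  case (snoc a v)
  show ?case
  proof (cases "v = []")
    case False
    then have "a \<in> P" "v \<in> fwords P"
      using snoc.prems by (simp_all add: fwords_def)
    then have "R (word_eval m f (v @ [a])) = R (m (R (word_eval m f v)) (f a))"
      using word_eval_append[of v "[a]"] by (simp add: R_R_mult f_in word_eval_in singleton_fwords)
    also have "\<dots> = f (th (word_R th v) a)"
      using snoc.IH \<open>a \<in> P\<close> \<open>v \<in> fwords P\<close> by (simp add: f_th word_R_in)
    finally show ?thesis
      using False by (simp add: word_R_snoc)
  qed (use snoc.prems in \<open>simp add: fwords_def f_projs R_proj\<close>)
qed (simp add: fwords_def)

lemma free_ext_fclass: "w \<in> fwords P \<Longrightarrow> free_ext m f (fclass P th de w) = word_eval m f w"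
  unfolding free_ext_def by (metis fclass_self mem_fclass someI word_eval_fcong)

lemma free_ext_drc_morph:
  "drc_morph (fcarrier P th de) (fmult P th de) (fD P th de) (fR P th de) S m D R (free_ext m f)"
  unfolding drc_morph_def ball_fcarrier
  by (simp add: free_ext_fclass word_eval_in fmult_fclass append_fwords word_eval_append
      fD_fclass fR_fclass singleton_fwords word_D_in word_R_in D_word_eval R_word_eval)

end

context proj_algebra
begin

lemma drc_morph_extension_exists:
  assumes "drc S m D R" and "pa_morph P th de (projs S D) (proj_th m R) (proj_de m D) f"
  shows "\<exists>g. drc_morph (fcarrier P th de) (fmult P th de) (fD P th de) (fR P th de) S m D R g \<and>
             (\<forall>p\<in>P. g (fclass P th de [p]) = f p)"
proof -
  interpret free_extension P th de S m D R f
    using assms proj_alg by (intro free_extension.intro free_extension_axioms.intro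
        proj_algebra.intro drc_semigroup.intro)
  show ?thesis
    using free_ext_drc_morph by (auto simp: free_ext_fclass singleton_fwords)
qed

end

theorem theorem8p13:
  fixes P :: "'a set" and th de :: "'a \<Rightarrow> 'a \<Rightarrow> 'a"
  assumes PA: "proj_alg P th de"
  shows
    \<comment> \<open>F(P) is a DRC-semigroup\<close>
    "drc (fcarrier P th de) (fmult P th de) (fD P th de) (fR P th de) \<and>
    \<comment> \<open>F is a functor on morphisms: F(phi) is a well-defined DRC-morphism acting letterwise\<close>
     (\<forall>(P' :: 'b set) th' de' f. proj_alg P' th' de' \<longrightarrow> pa_morph P th de P' th' de' f \<longrightarrow>
         drc_morph (fcarrier P th de) (fmult P th de) (fD P th de) (fR P th de)
                   (fcarrier P' th' de') (fmult P' th' de') (fD P' th' de') (fR P' th' de')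
                   (fmap P' th' de' f) \<and>
         (\<forall>w\<in>fwords P. fmap P' th' de' f (fclass P th de w) = fclass P' th' de' (map f w))) \<and>
    \<comment> \<open>P is a functor: P(S) is a projection algebra, restrictions of DRC-morphisms are PA-morphisms\<close>
     (\<forall>(S :: 'c set) m D R. drc S m D R \<longrightarrow>
         proj_alg (projs S D) (proj_th m R) (proj_de m D)) \<and>
     (\<forall>(S :: 'c set) m D R (S' :: 'd set) m' D' R' g. drc S m D R \<longrightarrow> drc S' m' D' R' \<longrightarrow>
         drc_morph S m D R S' m' D' R' g \<longrightarrow>
         pa_morph (projs S D) (proj_th m R) (proj_de m D)
                  (projs S' D') (proj_th m' R') (proj_de m' D') g) \<and>
    \<comment> \<open>the unit p maps to the class of x_p is a PA-morphism P -> P(F(P))\<close>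
     pa_morph P th de (projs (fcarrier P th de) (fD P th de))
          (proj_th (fmult P th de) (fR P th de)) (proj_de (fmult P th de) (fD P th de))
          (\<lambda>p. fclass P th de [p]) \<and>
    \<comment> \<open>universal property of the unit (F is left adjoint to P)\<close>
     (\<forall>(S :: 'c set) m D R f. drc S m D R \<longrightarrow>
         pa_morph P th de (projs S D) (proj_th m R) (proj_de m D) f \<longrightarrow>
         (\<exists>g. drc_morph (fcarrier P th de) (fmult P th de) (fD P th de) (fR P th de) S m D R g \<and>
              (\<forall>p\<in>P. g (fclass P th de [p]) = f p)) \<and>
         (\<forall>g1 g2. drc_morph (fcarrier P th de) (fmult P th de) (fD P th de) (fR P th de) S m D R g1 \<longrightarrow>
                  drc_morph (fcarrier P th de) (fmult P th de) (fD P th de) (fR P th de) S m D R g2 \<longrightarrow>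
                  (\<forall>p\<in>P. g1 (fclass P th de [p]) = g2 (fclass P th de [p])) \<longrightarrow>
                  (\<forall>c\<in>fcarrier P th de. g1 c = g2 c))) \<and>
    \<comment> \<open>coreflectivity: the unit is a bijective morphism, i.e. an isomorphism P = P(F(P))\<close>
     bij_betw (\<lambda>p. fclass P th de [p]) P (projs (fcarrier P th de) (fD P th de))"
proof -
  interpret proj_algebra P th de
    using PA by (rule proj_algebra.intro)
  show ?thesis
    apply (intro conjI allI impI ballI)
    subgoal by (rule drc_fcarrier)
    subgoal by (rule fmap_drc_morph)
    subgoal by (rule fmap_fclass)
    subgoal by (rule drc_semigroup.proj_alg_projs, rule drc_semigroup.intro)
    subgoal by (rule drc_morph_pa_morph)
    subgoal by (rule unit_pa_morph)
    subgoal by (rule drc_morph_extension_exists)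
    subgoal by (rule drc_morph_eq_on_generators)
    subgoal by (rule bij_betw_unit)
    done
qed

end
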